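(* Let $X$ and $Y$ be discrete random variables taking values in a finite set $\mathcal{A}$ with $|\mathcal{A}|=M\ge 2$, with $d_{\mathrm{TV}}(X,Y)>0$. Assume that for some positive constants $\varepsilon_1,\varepsilon_2$, $$d_{\mathrm{TV}}(X,Y)\le\varepsilon_1\le 1-\frac{1}{M\varepsilon_2},\qquad \frac{d_{\mathrm{loc}}(X,Y)}{d_{\mathrm{TV}}(X,Y)}\le\varepsilon_2\le 1.$$ Then $$|H(X)-H(Y)|\le\varepsilon_1\log(M\varepsilon_2-1)+h(\varepsilon_1).$$
   Context: For discrete random variables $X,Y$ on a set $\mathcal{A}$ with probability mass functions $P_X,P_Y$, the local distance is $d_{\mathrm{loc}}(X,Y) = \sup_{u\in\mathcal{A}} |P_X(u)-P_Y(u)|$ and the total variation distance is $d_{\mathrm{TV}}(X,Y) = \frac12\sum_{u\in\mathcal{A}}|P_X(u)-P_Y(u)|$. All logarithms are natural and entropies are in nats, with $0\log0=0$. $h(x) = -x\log x-(1-x)\log(1-x)$ denotes the binary entropy function. *)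

theory Defs
  imports "HOL-Probability.Probability"
begin

text \<open>Distributions of discrete random variables on a finite alphabet A are
represented by probability mass functions (type pmf) supported in A.\<close>

definition entropy_on :: "'a set \<Rightarrow> 'a pmf \<Rightarrow> real" where
  "entropy_on A p = - (\<Sum>u\<in>A. pmf p u * ln (pmf p u))"

definition d_loc :: "'a set \<Rightarrow> 'a pmf \<Rightarrow> 'a pmf \<Rightarrow> real" where
  "d_loc A p q = (SUP u\<in>A. \<bar>pmf p u - pmf q u\<bar>)"

definition d_TV :: "'a set \<Rightarrow> 'a pmf \<Rightarrow> 'a pmf \<Rightarrow> real" where
  "d_TV A p q = (1/2) * (\<Sum>u\<in>A. \<bar>pmf p u - pmf q u\<bar>)"

definition bin_entropy :: "real \<Rightarrow> real" where
  "bin_entropy x = - x * ln x - (1 - x) * ln (1 - x)"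

end

theory Submission imports Defs begin

(* Write p = pmf X, q = pmf Y and split
   both along their overlap m = min p q: p = m + d, q = m + e, where d and e have
   disjoint supports and total mass theta = d_TV, while m has mass 1 - theta.
   Super-additivity of x ln x bounds sum p ln p from below by the m- and d-parts;
   the q-part is expanded exactly, and its two cross terms are controlled by the
   log-sum inequality, which together produce the binary entropy h(theta).  The
   d-part is bounded by the size of its support P, the e-part by theta ln eta
   with eta = d_loc, and counting supports gives |P| eta <= |A| eta - theta.  This
   yields |H(X) - H(Y)| <= theta ln(|A| eta/theta - 1) + h(theta)
   (lemma entropy_difference_bound).  Finally eta/theta <= eps2 and the map
   t |-> t ln K + h(t) is nondecreasing on (0, K/(K+1)], which lets us replace
   theta, eta by eps1, eps2. *)

text \<open>Pointwise form of the log-sum inequality, obtained from ln x \<le> x - 1.\<close>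
lemma weighted_ln_ratio_le:
  fixes a c S C :: real
  assumes "a \<ge> 0" "c \<ge> 0" "a > 0 \<Longrightarrow> c > 0" "S > 0" "C > 0"
  shows "a * ln (c / a) \<le> a * ln (C / S) + c * S / C - a"
proof (cases "a = 0")
  case True
  thus ?thesis using assms by simp
next
  case False
  hence a: "a > 0" and c: "c > 0" using assms by auto
  have "ln (c / a) - ln (C / S) = ln ((c * S) / (a * C))"
    using a c assms by (simp add: ln_div ln_mult)
  also have "\<dots> \<le> (c * S) / (a * C) - 1"
    using a c assms by (intro ln_le_minus_one) simp
  finally have "a * (ln (c / a) - ln (C / S)) \<le> a * ((c * S) / (a * C) - 1)"
    using a by (simp add: mult_left_mono)
  thus ?thesis using a by (simp add: algebra_simps)
qed

lemma log_sum_inequality: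
  fixes a c :: "'a \<Rightarrow> real"
  assumes "finite A" "\<And>u. u \<in> A \<Longrightarrow> a u \<ge> 0" "\<And>u. u \<in> A \<Longrightarrow> c u \<ge> 0"
    "\<And>u. u \<in> A \<Longrightarrow> a u > 0 \<Longrightarrow> c u > 0"
    "sum a A = S" "sum c A = C" "S > 0" "C > 0"
  shows "(\<Sum>u\<in>A. a u * ln (c u / a u)) \<le> S * ln (C / S)"
proof -
  have "(\<Sum>u\<in>A. a u * ln (c u / a u))
          \<le> (\<Sum>u\<in>A. a u * ln (C / S) + c u * S / C - a u)"
    by (intro sum_mono weighted_ln_ratio_le) (use assms in auto)
  also have "\<dots> = (\<Sum>u\<in>A. a u) * ln (C / S) + (\<Sum>u\<in>A. c u) * S / C - (\<Sum>u\<in>A. a u)"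
    by (simp add: sum.distrib sum_subtractf sum_distrib_right sum_divide_distrib)
  also have "\<dots> = S * ln (C / S)" using assms by simp
  finally show ?thesis .
qed

lemma xlnx_superadditive:
  fixes a b :: real
  assumes "a \<ge> 0" "b \<ge> 0"
  shows "a * ln a + b * ln b \<le> (a + b) * ln (a + b)"
proof (cases "a = 0 \<or> b = 0")
  case True
  thus ?thesis using assms by auto
next
  case False
  hence "a > 0" "b > 0" using assms by auto
  hence "a * ln a \<le> a * ln (a + b)" "b * ln b \<le> b * ln (a + b)"
    by (auto intro: mult_left_mono)
  thus ?thesis by (simp add: algebra_simps)
qed

lemma xlnx_split:
  fixes a b :: real
  assumes "a \<ge> 0" "b \<ge> 0"
  shows "(a + b) * ln (a + b)
           = a * ln a + b * ln b + a * ln ((a + b) / a) + b * ln ((a + b) / b)"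
proof (cases "a = 0 \<or> b = 0")
  case True
  thus ?thesis using assms by auto
next
  case False
  hence "a > 0" "b > 0" using assms by auto
  thus ?thesis by (simp add: ln_div algebra_simps)
qed

lemma positive_somewhere:
  fixes d :: "'a \<Rightarrow> real"
  assumes "sum d A > 0"
  shows "\<exists>u\<in>A. d u > 0"
proof (rule ccontr)
  assume "\<not> (\<exists>u\<in>A. d u > 0)"
  hence "sum d A \<le> 0" by (intro sum_nonpos) (auto simp: not_less)
  thus False using assms by simp
qed

text \<open>A nonnegative vector of mass S > 0 supported on P has entropy at most ln |P|:
  in unnormalised form, - sum d ln d \<le> S ln (|P| / S).\<close>
lemma neg_xlnx_sum_le_support:
  fixes d :: "'a \<Rightarrow> real"
  assumes fin: "finite A" and d0: "\<And>u. u \<in> A \<Longrightarrow> d u \<ge> 0"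
    and sd: "sum d A = S" and S0: "S > 0"
  shows "- (\<Sum>u\<in>A. d u * ln (d u)) \<le> S * ln (real (card {u\<in>A. d u > 0}) / S)"
proof -
  define P where "P = {u\<in>A. d u > 0}"
  have "P \<noteq> {}" using positive_somewhere[of d A] sd S0 by (auto simp: P_def)
  hence cP: "card P > 0" using fin by (simp add: P_def card_gt_0_iff)
  have indicator_sum: "(\<Sum>u\<in>A. if d u > 0 then 1 else (0::real)) = real (card P)"
    using fin by (simp add: P_def sum.inter_filter[symmetric])
  have "(\<Sum>u\<in>A. d u * ln ((if d u > 0 then 1 else 0) / d u)) \<le> S * ln (real (card P) / S)"
    by (rule log_sum_inequality) (use fin d0 sd S0 indicator_sum cP in auto)
  moreover have "(\<Sum>u\<in>A. d u * ln ((if d u > 0 then 1 else 0) / d u))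
                   = - (\<Sum>u\<in>A. d u * ln (d u))"
    unfolding sum_negf[symmetric]
    by (rule sum.cong) (use d0 in \<open>auto simp: ln_div order_le_less\<close>)
  ultimately show ?thesis by (simp add: P_def)
qed

lemma xlnx_sum_le_max:
  fixes e :: "'a \<Rightarrow> real"
  assumes "\<And>u. u \<in> A \<Longrightarrow> 0 \<le> e u" "\<And>u. u \<in> A \<Longrightarrow> e u \<le> \<eta>"
  shows "(\<Sum>u\<in>A. e u * ln (e u)) \<le> sum e A * ln \<eta>"
proof -
  have "(\<Sum>u\<in>A. e u * ln (e u)) \<le> (\<Sum>u\<in>A. e u * ln \<eta>)"
  proof (rule sum_mono)
    fix u assume u: "u \<in> A"
    show "e u * ln (e u) \<le> e u * ln \<eta>"
    proof (cases "e u = 0")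
      case False
      hence "e u > 0" using assms(1)[OF u] by linarith
      thus ?thesis using assms(2)[OF u] by (intro mult_left_mono) auto
    qed simp
  qed
  thus ?thesis by (simp add: sum_distrib_right)
qed

lemma disjoint_support_count:
  fixes d e :: "'a \<Rightarrow> real"
  assumes fin: "finite A" and e0: "\<And>u. u \<in> A \<Longrightarrow> 0 \<le> e u"
    and e_le: "\<And>u. u \<in> A \<Longrightarrow> e u \<le> \<eta>" and eta0: "\<eta> > 0"
    and disj: "\<And>u. d u = 0 \<or> e u = 0" and se: "sum e A = \<theta>"
  shows "real (card {u\<in>A. d u > 0}) * \<eta> \<le> real (card A) * \<eta> - \<theta>"
proof -
  define P where "P = {u\<in>A. d u > 0}"
  define N where "N = {u\<in>A. e u > 0}"
  have finPN: "finite P" "finite N" using fin by (auto simp: P_def N_def)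
  have "sum e A = sum e N"
    using fin e0 unfolding N_def
    by (intro sum.mono_neutral_right) (auto simp: order_le_less)
  also have "\<dots> \<le> real (card N) * \<eta>"
    by (rule sum_bounded_above) (use e_le in \<open>auto simp: N_def\<close>)
  finally have cN: "\<theta> \<le> real (card N) * \<eta>" using se by simp
  have "P \<inter> N = {}" unfolding P_def N_def using disj
    by (metis (mono_tags, lifting) disjoint_iff less_irrefl mem_Collect_eq)
  hence "card P + card N = card (P \<union> N)" using finPN by (simp add: card_Un_disjoint)
  also have "\<dots> \<le> card A" using fin by (intro card_mono) (auto simp: P_def N_def)
  finally have "real (card P) \<le> real (card A) - real (card N)" by linarith
  hence "real (card P) * \<eta> \<le> (real (card A) - real (card N)) * \<eta>"
    using eta0 by (intro mult_right_mono) auto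
  thus ?thesis using cN by (simp add: P_def left_diff_distrib)
qed

lemma entropy_difference_bound:
  fixes p q :: "'a \<Rightarrow> real"
  assumes fin: "finite A"
    and p0: "\<And>u. u \<in> A \<Longrightarrow> p u \<ge> 0" and q0: "\<And>u. u \<in> A \<Longrightarrow> q u \<ge> 0"
    and sp: "sum p A = 1" and sq: "sum q A = 1"
    and th: "\<theta> = (1/2) * (\<Sum>u\<in>A. \<bar>p u - q u\<bar>)" and th0: "0 < \<theta>" and th1: "\<theta> < 1"
    and eta: "\<And>u. u \<in> A \<Longrightarrow> \<bar>p u - q u\<bar> \<le> \<eta>" and eta0: "\<eta> > 0"
  shows "(\<Sum>u\<in>A. q u * ln (q u)) - (\<Sum>u\<in>A. p u * ln (p u))
          \<le> \<theta> * ln (real (card A) * \<eta> / \<theta> - 1) + bin_entropy \<theta>"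
proof -
  define m where "m u = min (p u) (q u)" for u
  define d where "d u = p u - m u" for u
  define e where "e u = q u - m u" for u
  have m0: "m u \<ge> 0" if "u \<in> A" for u using p0[OF that] q0[OF that] by (simp add: m_def)
  have d0: "d u \<ge> 0" and e0: "e u \<ge> 0" for u by (simp_all add: d_def e_def m_def)
  have pd: "p u = m u + d u" and qe: "q u = m u + e u" for u by (simp_all add: d_def e_def)
  have absd: "\<bar>p u - q u\<bar> = d u + e u" for u by (simp add: d_def e_def m_def)
  have disj: "d u = 0 \<or> e u = 0" for u by (simp add: d_def e_def m_def min_def)
  have e_le: "e u \<le> \<eta>" if "u \<in> A" for u using eta[OF that] absd[of u] d0[of u] by simp
  have "sum p A = sum m A + sum d A" "sum q A = sum m A + sum e A"
    by (simp_all add: pd qe sum.distrib)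
  moreover have "2 * \<theta> = sum d A + sum e A" using th by (simp add: absd sum.distrib)
  ultimately have sd: "sum d A = \<theta>" and se: "sum e A = \<theta>" and sm: "sum m A = 1 - \<theta>"
    using sp sq by linarith+
  have p_part: "(\<Sum>u\<in>A. m u * ln (m u)) + (\<Sum>u\<in>A. d u * ln (d u)) \<le> (\<Sum>u\<in>A. p u * ln (p u))"
    unfolding sum.distrib[symmetric]
    by (rule sum_mono) (simp add: pd xlnx_superadditive m0 d0)
  have q_part: "(\<Sum>u\<in>A. q u * ln (q u))
      = (\<Sum>u\<in>A. m u * ln (m u)) + (\<Sum>u\<in>A. e u * ln (e u))
        + (\<Sum>u\<in>A. m u * ln (q u / m u)) + (\<Sum>u\<in>A. e u * ln (q u / e u))"
    unfolding sum.distrib[symmetric]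
    by (rule sum.cong) (simp_all add: qe xlnx_split m0 e0)
  text \<open>The two cross terms together give the binary entropy of theta.\<close>
  have cross_m: "(\<Sum>u\<in>A. m u * ln (q u / m u)) \<le> (1 - \<theta>) * ln (1 / (1 - \<theta>))"
    by (rule log_sum_inequality)
      (use fin m0 q0 sm sq th1 e0 qe in \<open>auto intro: add_pos_nonneg\<close>)
  have cross_e: "(\<Sum>u\<in>A. e u * ln (q u / e u)) \<le> \<theta> * ln (1 / \<theta>)"
    by (rule log_sum_inequality)
      (use fin e0 q0 se sq th0 m0 qe in \<open>auto intro: add_nonneg_pos\<close>)
  have h: "bin_entropy \<theta> = \<theta> * ln (1 / \<theta>) + (1 - \<theta>) * ln (1 / (1 - \<theta>))"
    unfolding bin_entropy_def using th0 th1 by (simp add: ln_div)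
  define P where "P = {u\<in>A. d u > 0}"
  have d_part: "- (\<Sum>u\<in>A. d u * ln (d u)) \<le> \<theta> * ln (real (card P) / \<theta>)"
    using neg_xlnx_sum_le_support[OF fin _ sd th0] d0 by (simp add: P_def)
  have e_part: "(\<Sum>u\<in>A. e u * ln (e u)) \<le> \<theta> * ln \<eta>"
    using xlnx_sum_le_max[of A e \<eta>] e0 e_le se by simp
  have count: "real (card P) * \<eta> \<le> real (card A) * \<eta> - \<theta>"
    unfolding P_def by (rule disjoint_support_count[OF fin _ e_le eta0 disj se]) (simp add: e0)
  have "P \<noteq> {}" using positive_somewhere[of d A] sd th0 by (auto simp: P_def)
  hence cP: "card P > 0" using fin by (simp add: P_def card_gt_0_iff)
  have "\<theta> * ln (real (card P) / \<theta>) + \<theta> * ln \<eta> = \<theta> * ln (real (card P) * \<eta> / \<theta>)"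
    using cP th0 eta0 by (simp add: ln_div ln_mult algebra_simps)
  also have "\<dots> \<le> \<theta> * ln (real (card A) * \<eta> / \<theta> - 1)"
  proof -
    have "real (card P) * \<eta> / \<theta> \<le> real (card A) * \<eta> / \<theta> - 1"
      using count th0 by (simp add: field_simps)
    moreover have "real (card P) * \<eta> / \<theta> > 0" using cP eta0 th0 by simp
    ultimately have "ln (real (card P) * \<eta> / \<theta>) \<le> ln (real (card A) * \<eta> / \<theta> - 1)"
      by simp
    thus ?thesis using th0 by (simp add: mult_left_mono)
  qed
  finally show ?thesis
    using p_part q_part cross_m cross_e h d_part e_part by linarith
qed

text \<open>t \<mapsto> t ln K + h(t) is nondecreasing on (0, K/(K+1)]: its derivative
  ln (K (1-t)/t) is nonnegative there.  Proved via ln x \<le> x - 1 without calculus.\<close>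
lemma bin_entropy_shift_mono:
  fixes t s K :: real
  assumes t0: "0 < t" and ts: "t \<le> s" and K0: "K > 0" and sK: "s \<le> K / (K + 1)"
  shows "t * ln K + bin_entropy t \<le> s * ln K + bin_entropy s"
proof -
  have "K / (K + 1) < 1" using K0 by simp
  hence s1: "s < 1" using sK by linarith
  have s0: "s > 0" and t1: "t < 1" using t0 ts s1 by linarith+
  have "ln (s / t) \<le> s / t - 1" using t0 s0 by (intro ln_le_minus_one) simp
  hence "t * ln (s / t) \<le> t * (s / t - 1)" using t0 by (simp add: mult_left_mono)
  hence left: "t * ln s - t * ln t \<le> s - t"
    using t0 s0 by (simp add: ln_div algebra_simps)
  have "ln ((1 - s) / (1 - t)) \<le> (1 - s) / (1 - t) - 1"
    using s1 t1 by (intro ln_le_minus_one) simp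
  hence "(1 - t) * ln ((1 - s) / (1 - t)) \<le> (1 - t) * ((1 - s) / (1 - t) - 1)"
    using t1 by (simp add: mult_left_mono)
  also have "\<dots> = t - s" using t1 by (simp add: field_simps)
  finally have right: "(1 - t) * ln (1 - s) - (1 - t) * ln (1 - t) \<le> t - s"
    using s1 t1 by (simp add: ln_div algebra_simps)
  have "0 \<le> ln (K * (1 - s) / s)"
    using K0 s0 s1 sK by (intro ln_ge_zero) (simp add: field_simps)
  hence "(t - s) * (ln K + ln (1 - s) - ln s) \<le> 0"
    using K0 s0 s1 ts by (simp add: ln_div ln_mult mult_nonpos_nonneg)
  thus ?thesis using left right unfolding bin_entropy_def by (simp add: algebra_simps)
qed

lemma d_loc_upper:
  assumes "finite A" "u \<in> A"
  shows "\<bar>pmf p u - pmf q u\<bar> \<le> d_loc A p q"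
  unfolding d_loc_def using assms by (intro cSUP_upper) (auto simp: bdd_above_finite)

lemma d_TV_le_card_d_loc:
  assumes "finite A"
  shows "2 * d_TV A p q \<le> real (card A) * d_loc A p q"
proof -
  have "(\<Sum>u\<in>A. \<bar>pmf p u - pmf q u\<bar>) \<le> real (card A) * d_loc A p q"
    by (rule sum_bounded_above) (rule d_loc_upper[OF assms])
  thus ?thesis by (simp add: d_TV_def)
qed

lemma d_loc_pos:
  assumes "finite A" "d_TV A p q > 0"
  shows "d_loc A p q > 0"
proof -
  have "\<exists>u\<in>A. \<bar>pmf p u - pmf q u\<bar> > 0"
    using assms(2) by (intro positive_somewhere) (simp add: d_TV_def)
  thus ?thesis using d_loc_upper[OF assms(1)] by (meson less_le_trans)
qed

lemma entropy_on_difference_bound: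
  assumes fin: "finite A" and "set_pmf X \<subseteq> A" "set_pmf Y \<subseteq> A"
    and th0: "d_TV A X Y > 0" and th1: "d_TV A X Y < 1"
  shows "\<bar>entropy_on A X - entropy_on A Y\<bar>
           \<le> d_TV A X Y * ln (real (card A) * d_loc A X Y / d_TV A X Y - 1)
             + bin_entropy (d_TV A X Y)"
proof -
  have sX: "sum (pmf X) A = 1" and sY: "sum (pmf Y) A = 1"
    using assms by (auto intro: sum_pmf_eq_1)
  have th: "d_TV A X Y = (1/2) * (\<Sum>u\<in>A. \<bar>pmf X u - pmf Y u\<bar>)"
    "d_TV A X Y = (1/2) * (\<Sum>u\<in>A. \<bar>pmf Y u - pmf X u\<bar>)"
    by (simp_all add: d_TV_def abs_minus_commute)
  have eta: "\<bar>pmf X u - pmf Y u\<bar> \<le> d_loc A X Y" "\<bar>pmf Y u - pmf X u\<bar> \<le> d_loc A X Y"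
    if "u \<in> A" for u
    using d_loc_upper[OF fin that] by (simp_all add: abs_minus_commute)
  note eta0 = d_loc_pos[OF fin th0]
  show ?thesis
    using entropy_difference_bound[OF fin _ _ sX sY th(1) th0 th1 eta(1) eta0]
      entropy_difference_bound[OF fin _ _ sY sX th(2) th0 th1 eta(2) eta0]
    unfolding entropy_on_def by simp
qed

theorem corollary2:
  fixes A :: "'a set" and X Y :: "'a pmf" and M :: nat and \<epsilon>1 \<epsilon>2 :: real
  assumes "finite A" and "card A = M" and "M \<ge> 2"
    and "set_pmf X \<subseteq> A" and "set_pmf Y \<subseteq> A"
    and "d_TV A X Y > 0"
    and "\<epsilon>1 > 0" and "\<epsilon>2 > 0"
    and "d_TV A X Y \<le> \<epsilon>1" and "\<epsilon>1 \<le> 1 - 1 / (real M * \<epsilon>2)"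
    and "d_loc A X Y / d_TV A X Y \<le> \<epsilon>2" and "\<epsilon>2 \<le> 1"
  shows "\<bar>entropy_on A X - entropy_on A Y\<bar>
           \<le> \<epsilon>1 * ln (real M * \<epsilon>2 - 1) + bin_entropy \<epsilon>1"
proof -
  define \<theta> where "\<theta> = d_TV A X Y"
  define K where "K = real M * \<epsilon>2 - 1"
  have th0: "\<theta> > 0" using assms(6) by (simp add: \<theta>_def)
  have "1 / (real M * \<epsilon>2) > 0" using assms(3,8) by simp
  hence th1: "\<theta> < 1" using assms(9,10) unfolding \<theta>_def by linarith
  have two: "2 \<le> real M * d_loc A X Y / \<theta>"
    using d_TV_le_card_d_loc[OF assms(1), of X Y] th0 assms(2) by (simp add: \<theta>_def field_simps)
  have "real M * d_loc A X Y / \<theta> \<le> real M * \<epsilon>2"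
    using mult_left_mono[OF assms(11)[folded \<theta>_def], of "real M"] by simp
  hence ratio: "1 \<le> real M * d_loc A X Y / \<theta> - 1" "real M * d_loc A X Y / \<theta> - 1 \<le> K"
    using two by (simp_all add: K_def)
  have K0: "K > 0" using ratio by linarith
  have K_bound: "\<epsilon>1 \<le> K / (K + 1)"
    using assms(3,8,10) by (simp add: K_def field_simps)
  have "\<bar>entropy_on A X - entropy_on A Y\<bar>
          \<le> \<theta> * ln (real M * d_loc A X Y / \<theta> - 1) + bin_entropy \<theta>"
    using entropy_on_difference_bound[OF assms(1,4,5,6) th1[unfolded \<theta>_def]] assms(2)
    by (simp add: \<theta>_def)
  also have "\<dots> \<le> \<theta> * ln K + bin_entropy \<theta>"
    by (intro add_right_mono mult_left_mono ln_mono) (use ratio th0 in linarith)+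
  also have "\<dots> \<le> \<epsilon>1 * ln K + bin_entropy \<epsilon>1"
    using bin_entropy_shift_mono[OF th0 _ K0 K_bound] assms(9) by (simp add: \<theta>_def)
  finally show ?thesis by (simp add: K_def)
qed

end
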